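(* In the setting of the context, $\Pi^\rho_0\ne\emptyset$ if and only if $\rho_0=0$. Moreover, in this case either $\Pi^\rho_0=\{\mathbf{0}\}$ or $\Pi^\rho_0$ fails to be compact.
   Context: Let $(\Omega,\mathcal{F},\mathbb{P})$ be a probability space and a market: riskless asset $S^0_0=1$, $S^0_1=1+r$, $r>-1$; risky assets $S^1,\dots,S^d$ with constants $S^i_0>0$ and real-valued $\mathcal{F}$-measurable $S^i_1$; returns $R^i:=(S^i_1-S^i_0)/S^i_0$. Standing assumptions: nonredundancy (if $\theta\in\mathbb{R}^{1+d}$ with $\sum_{i=0}^d\theta^iS^i_t=0$ a.s. for $t\in\{0,1\}$ then $\theta=0$), $R^i\in L^1$, $\mathbb{E}[R^i]\ne r$ for some $i$. Excess return of $\pi\in\mathbb{R}^d$: $X_\pi:=\pi\cdot(R-r\mathbf{1})$; $\Pi_0:=\{\pi:\mathbb{E}[X_\pi]=0\}$. $L$ is a Riesz space with $L^\infty\subset L\subset L^1$ containing all $X_\pi$; $\rho:L\to(-\infty,\infty]$ is monotone, cash-invariant ($\rho(X+c)=\rho(X)-c$) and positively homogeneous ($\rho(\lambda X)=\lambda\rho(X)$, $\lambda\ge0$). $\rho_0:=\inf\{\rho(X_\pi):\pi\in\Pi_0\}$ and $\Pi^\rho_0$ is the set of $\pi\in\Pi_0$ with $\rho(X_\pi)<\infty$ and $\rho(X_\pi)\le\rho(X_{\pi'})$ for all $\pi'\in\Pi_0$. *)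

theory Defs
  imports "HOL-Probability.Probability"
begin

text \<open>One-period market. Risky assets are indexed by the finite type 'd
(so d = CARD('d)); portfolios are vectors in real^'d.\<close>

definition returns :: "('d \<Rightarrow> real) \<Rightarrow> ('d \<Rightarrow> 'a \<Rightarrow> real) \<Rightarrow> 'd \<Rightarrow> 'a \<Rightarrow> real" where
  "returns S0 S1 i \<omega> = (S1 i \<omega> - S0 i) / S0 i"

definition excess_return ::
  "real \<Rightarrow> ('d::finite \<Rightarrow> real) \<Rightarrow> ('d \<Rightarrow> 'a \<Rightarrow> real) \<Rightarrow> real^'d \<Rightarrow> 'a \<Rightarrow> real" where
  "excess_return r S0 S1 \<pi> \<omega> = (\<Sum>i\<in>UNIV. \<pi> $ i * (returns S0 S1 i \<omega> - r))"

definition market :: "'a measure \<Rightarrow> real \<Rightarrow> ('d::finite \<Rightarrow> real) \<Rightarrow> ('d \<Rightarrow> 'a \<Rightarrow> real) \<Rightarrow> bool" where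
  "market M r S0 S1 \<longleftrightarrow>
     prob_space M \<and> r > -1 \<and> (\<forall>i. S0 i > 0) \<and> (\<forall>i. S1 i \<in> borel_measurable M) \<and>
     \<comment> \<open>nonredundancy\<close>
     (\<forall>(\<theta>0::real) (\<theta>::real^'d).
        (\<theta>0 + (\<Sum>i\<in>UNIV. \<theta> $ i * S0 i) = 0 \<and>
         (AE \<omega> in M. \<theta>0 * (1 + r) + (\<Sum>i\<in>UNIV. \<theta> $ i * S1 i \<omega>) = 0))
        \<longrightarrow> \<theta>0 = 0 \<and> \<theta> = 0) \<and>
     (\<forall>i. integrable M (returns S0 S1 i)) \<and>
     (\<exists>i. integral\<^sup>L M (returns S0 S1 i) \<noteq> r)"

text \<open>L: a Riesz space (linear subspace closed under pointwise max, i.e. a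
vector sublattice) of random variables with L^\<infinity> \<subseteq> L \<subseteq> L^1, containing all
excess returns.\<close>
definition admissible_space :: "'a measure \<Rightarrow> ('a \<Rightarrow> real) set \<Rightarrow> bool" where
  "admissible_space M L \<longleftrightarrow>
     (\<forall>X\<in>L. \<forall>Y\<in>L. (\<lambda>\<omega>. X \<omega> + Y \<omega>) \<in> L) \<and>
     (\<forall>X\<in>L. \<forall>c::real. (\<lambda>\<omega>. c * X \<omega>) \<in> L) \<and>
     (\<forall>X\<in>L. \<forall>Y\<in>L. (\<lambda>\<omega>. max (X \<omega>) (Y \<omega>)) \<in> L) \<and>
     (\<forall>X. X \<in> borel_measurable M \<and> (\<exists>C. AE \<omega> in M. \<bar>X \<omega>\<bar> \<le> C) \<longrightarrow> X \<in> L) \<and>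
     (\<forall>X\<in>L. integrable M X)"

definition risk_functional :: "'a measure \<Rightarrow> ('a \<Rightarrow> real) set \<Rightarrow> (('a \<Rightarrow> real) \<Rightarrow> ereal) \<Rightarrow> bool" where
  "risk_functional M L \<rho> \<longleftrightarrow>
     (\<forall>X\<in>L. \<rho> X \<noteq> -\<infinity>) \<and>
     (\<forall>X\<in>L. \<forall>Y\<in>L. (AE \<omega> in M. X \<omega> \<le> Y \<omega>) \<longrightarrow> \<rho> Y \<le> \<rho> X) \<and>
     (\<forall>X\<in>L. \<forall>c::real. \<rho> (\<lambda>\<omega>. X \<omega> + c) = \<rho> X - ereal c) \<and>
     (\<forall>X\<in>L. \<forall>t::real. t \<ge> 0 \<longrightarrow> \<rho> (\<lambda>\<omega>. t * X \<omega>) = ereal t * \<rho> X)"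

definition Pi0 :: "'a measure \<Rightarrow> real \<Rightarrow> ('d::finite \<Rightarrow> real) \<Rightarrow> ('d \<Rightarrow> 'a \<Rightarrow> real) \<Rightarrow> (real^'d) set" where
  "Pi0 M r S0 S1 = {\<pi>. integral\<^sup>L M (excess_return r S0 S1 \<pi>) = 0}"

definition rho0 :: "'a measure \<Rightarrow> real \<Rightarrow> ('d::finite \<Rightarrow> real) \<Rightarrow> ('d \<Rightarrow> 'a \<Rightarrow> real)
    \<Rightarrow> (('a \<Rightarrow> real) \<Rightarrow> ereal) \<Rightarrow> ereal" where
  "rho0 M r S0 S1 \<rho> = (INF \<pi>\<in>Pi0 M r S0 S1. \<rho> (excess_return r S0 S1 \<pi>))"

definition Pi0_rho :: "'a measure \<Rightarrow> real \<Rightarrow> ('d::finite \<Rightarrow> real) \<Rightarrow> ('d \<Rightarrow> 'a \<Rightarrow> real)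
    \<Rightarrow> (('a \<Rightarrow> real) \<Rightarrow> ereal) \<Rightarrow> (real^'d) set" where
  "Pi0_rho M r S0 S1 \<rho> = {\<pi>\<in>Pi0 M r S0 S1. \<rho> (excess_return r S0 S1 \<pi>) < \<infinity> \<and>
       (\<forall>\<pi>'\<in>Pi0 M r S0 S1. \<rho> (excess_return r S0 S1 \<pi>) \<le> \<rho> (excess_return r S0 S1 \<pi>'))}"

end

theory Submission
  imports Defs
begin

text \<open>Both \<open>\<Pi>\<^sub>0\<close> and \<open>\<pi> \<mapsto> \<rho>(X\<^sub>\<pi>)\<close> are compatible with scaling by \<open>t \<ge> 0\<close>.
  Hence \<open>\<rho>(X\<^sub>0) = 0\<close>, so a minimiser with finite value \<open>v\<close> has \<open>v \<le> 0\<close> and,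
  comparing it with twice itself, \<open>v \<le> 2v\<close>, i.e. \<open>v = 0\<close>. The minimisers with finite
  value are then exactly the zeros of \<open>\<pi> \<mapsto> \<rho>(X\<^sub>\<pi>)\<close> on \<open>\<Pi>\<^sub>0\<close> when \<open>\<rho>\<^sub>0 = 0\<close>;
  they form a cone, and a cone containing a nonzero point is unbounded.\<close>

lemma bounded_cone_subset_0:
  fixes S :: "'a::real_normed_vector set"
  assumes "cone S" and "bounded S"
  shows "S \<subseteq> {0}"
proof
  fix x assume "x \<in> S"
  obtain B where B: "\<And>y. y \<in> S \<Longrightarrow> norm y \<le> B"
    using \<open>bounded S\<close> unfolding bounded_iff by blast
  show "x \<in> {0}"
  proof (rule ccontr)
    assume "x \<notin> {0}"
    then have "norm x > 0" by simp
    define t where "t = (\<bar>B\<bar> + 1) / norm x"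
    have "t \<ge> 0" and "norm (t *\<^sub>R x) = \<bar>B\<bar> + 1"
      using \<open>norm x > 0\<close> by (simp_all add: t_def)
    moreover have "norm (t *\<^sub>R x) \<le> B"
      using B mem_cone[OF \<open>cone S\<close> \<open>x \<in> S\<close> \<open>t \<ge> 0\<close>] .
    ultimately show False
      by linarith
  qed
qed

lemma cone_compact_imp_subset_0:
  fixes S :: "'a::real_normed_vector set"
  shows "cone S \<Longrightarrow> compact S \<Longrightarrow> S \<subseteq> {0}"
  using bounded_cone_subset_0 compact_imp_bounded by blast

definition finite_argmin_on :: "('v \<Rightarrow> ereal) \<Rightarrow> 'v set \<Rightarrow> 'v set" where
  "finite_argmin_on f C = {x\<in>C. f x < \<infinity> \<and> (\<forall>y\<in>C. f x \<le> f y)}"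

locale positively_homogeneous_on_cone =
  fixes C :: "'v::real_vector set" and f :: "'v \<Rightarrow> ereal"
  assumes cone: "cone C"
    and zero_mem: "0 \<in> C"
    and homogeneous: "\<And>x t. x \<in> C \<Longrightarrow> t \<ge> 0 \<Longrightarrow> f (t *\<^sub>R x) = ereal t * f x"
    and not_MInf: "\<And>x. x \<in> C \<Longrightarrow> f x \<noteq> -\<infinity>"
begin

lemma f_zero: "f 0 = 0"
  using homogeneous[OF zero_mem, of 0] by (simp add: zero_ereal_def[symmetric])

lemma f_eq_0_if_finite_argmin_on:
  assumes "x \<in> finite_argmin_on f C"
  shows "f x = 0"
proof -
  have "x \<in> C" and "f x < \<infinity>" and min: "\<And>y. y \<in> C \<Longrightarrow> f x \<le> f y"
    using assms by (auto simp: finite_argmin_on_def)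
  obtain v where v: "f x = ereal v"
    using \<open>f x < \<infinity>\<close> not_MInf[OF \<open>x \<in> C\<close>] by (cases "f x") auto
  have "v \<le> 0"
    using min[OF zero_mem] v f_zero by simp
  moreover have "v \<le> 2 * v"
    using min[OF mem_cone[OF cone \<open>x \<in> C\<close>, of 2]] homogeneous[OF \<open>x \<in> C\<close>, of 2] v by simp
  ultimately show ?thesis
    using v by simp
qed

lemma finite_argmin_on_eq:
  assumes "(INF x\<in>C. f x) = 0"
  shows "finite_argmin_on f C = {x\<in>C. f x = 0}"
proof (intro set_eqI iffI)
  fix x
  assume x: "x \<in> finite_argmin_on f C"
  with f_eq_0_if_finite_argmin_on[OF x] show "x \<in> {x\<in>C. f x = 0}"
    by (simp add: finite_argmin_on_def)
next
  fix x
  assume x: "x \<in> {x\<in>C. f x = 0}"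
  have "f y \<ge> 0" if "y \<in> C" for y
    using INF_lower[OF that, of f] assms by simp
  with x show "x \<in> finite_argmin_on f C"
    by (simp add: finite_argmin_on_def)
qed

lemma finite_argmin_on_nonempty_iff:
  "finite_argmin_on f C \<noteq> {} \<longleftrightarrow> (INF x\<in>C. f x) = 0"
proof
  assume "finite_argmin_on f C \<noteq> {}"
  then obtain x where x: "x \<in> finite_argmin_on f C" by blast
  then have "(INF y\<in>C. f y) = f x"
    by (intro antisym INF_lower INF_greatest) (auto simp: finite_argmin_on_def)
  then show "(INF x\<in>C. f x) = 0"
    using f_eq_0_if_finite_argmin_on[OF x] by simp
next
  assume "(INF x\<in>C. f x) = 0"
  then show "finite_argmin_on f C \<noteq> {}"
    using finite_argmin_on_eq zero_mem f_zero by auto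
qed

lemma cone_finite_argmin_on: "cone (finite_argmin_on f C)"
proof (cases "finite_argmin_on f C = {}")
  case False
  then have "finite_argmin_on f C = {x\<in>C. f x = 0}"
    using finite_argmin_on_eq finite_argmin_on_nonempty_iff by blast
  then show ?thesis
    using cone homogeneous by (auto simp: cone_def)
qed (simp add: cone_def)

end

lemma excess_return_scaleR:
  "excess_return r S0 S1 (t *\<^sub>R \<pi>) = (\<lambda>\<omega>. t * excess_return r S0 S1 \<pi> \<omega>)"
  by (rule ext) (simp add: excess_return_def sum_distrib_left mult.assoc)

lemma cone_Pi0: "cone (Pi0 M r S0 S1)"
  by (simp add: cone_def Pi0_def excess_return_scaleR)

lemma zero_mem_Pi0: "0 \<in> Pi0 M r S0 S1"
  using excess_return_scaleR[of r S0 S1 0 0] by (simp add: Pi0_def)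

theorem proposition3p6:
  fixes M :: "'a measure" and r :: real
    and S0 :: "'d::finite \<Rightarrow> real" and S1 :: "'d \<Rightarrow> 'a \<Rightarrow> real"
    and L :: "('a \<Rightarrow> real) set" and \<rho> :: "('a \<Rightarrow> real) \<Rightarrow> ereal"
  assumes "market M r S0 S1"
    and "admissible_space M L"
    and "\<forall>\<pi>. excess_return r S0 S1 \<pi> \<in> L"
    and "risk_functional M L \<rho>"
  shows "(Pi0_rho M r S0 S1 \<rho> \<noteq> {} \<longleftrightarrow> rho0 M r S0 S1 \<rho> = 0) \<and>
         (Pi0_rho M r S0 S1 \<rho> \<noteq> {} \<longrightarrow>
            Pi0_rho M r S0 S1 \<rho> = {0} \<or> \<not> compact (Pi0_rho M r S0 S1 \<rho>))"
proof -
  let ?f = "\<lambda>\<pi>. \<rho> (excess_return r S0 S1 \<pi>)"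
  let ?A = "finite_argmin_on ?f (Pi0 M r S0 S1)"
  have in_L: "\<And>\<pi>. excess_return r S0 S1 \<pi> \<in> L"
    using assms(3) by blast
  interpret positively_homogeneous_on_cone "Pi0 M r S0 S1" ?f
  proof
    fix \<pi> :: "real^'d" and t :: real
    assume "t \<ge> 0"
    then show "?f (t *\<^sub>R \<pi>) = ereal t * ?f \<pi>"
      using assms(4) in_L unfolding risk_functional_def excess_return_scaleR by blast
  next
    fix \<pi> :: "real^'d"
    show "?f \<pi> \<noteq> -\<infinity>"
      using assms(4) in_L unfolding risk_functional_def by blast
  qed (rule cone_Pi0, rule zero_mem_Pi0)
  have "Pi0_rho M r S0 S1 \<rho> = ?A"
    by (simp add: Pi0_rho_def finite_argmin_on_def)
  moreover have "?A = {0} \<or> \<not> compact ?A" if "?A \<noteq> {}"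
    using that cone_compact_imp_subset_0[OF cone_finite_argmin_on] by blast
  ultimately show ?thesis
    using finite_argmin_on_nonempty_iff unfolding rho0_def by simp
qed

end
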